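(* Let $R\in\mathcal{RS}_n$ and let $S=\mathrm{Ctr}(R)$ be the corresponding sticky tree. Suppose that the leaf $f$ is the certificate of an internal node $u$ of positive depth in $R$, and let $v$ be the parent of $f$. Let $u',v'$ be the nodes of $S$ corresponding to $u,v$. Then $v'$ is the certificate of $u'$ in $S$.
   Context: Plane trees: a plane tree is a rooted tree in which the children of every node are linearly ordered (left to right); the root has depth $0$, a child of a node of depth $d$ has depth $d+1$; leaves are nodes without children, internal nodes have at least one child. The prefix order is: the root, followed by the prefix order of the subtree of its leftmost child, then of its second child, and so on. $R_u$ (or $S_u$) denotes the subtree rooted at $u$. Sticky trees: a sticky tree is a plane tree $S$ with node set $V$ and a labeling $\ell:V\to\mathbb{N}$ such that: (1) every node $u$ of depth $d$ has $0\le\ell(u)\le d$; (2) every node $u$ of depth $d>0$ has some $v\in S_u$ (possibly $v=u$) with $\ell(v)<d$; (3) for every node $u$ of depth $d$, if some $v\in S_u$ has $\ell(v)=d$, then every node of $S_u$ (including $u$) preceding $v$ in prefix order has label at least $d$. The certificate of a non-root node $u$ of depth $d$ in a sticky tree is the first node, in prefix order, of $S_u$ whose label is $<d$. Decorated trees: a decorated tree is a plane tree $R$ with an integer labeling $\ell$ defined only on its leaves such that: (1') for every leaf $f$ whose parent has depth $d$, $-1\le\ell(f)\le d-1$; (2') every internal node $u$ of depth $d>0$ has a descendant leaf $f$ with $\ell(f)<d-1$; (3') for every node $t$ of depth $d$ and every child $u$ of $t$, if some leaf $f$ of $R_u$ has $\ell(f)=d$, then every leaf of $R_u$ preceding $f$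 in prefix order has label at least $d$. The certificate of an internal node $u$ of depth $d>0$ in a decorated tree is the first leaf, in prefix order, of $R_u$ with label $<d-1$. $\mathcal{RS}_n$ is the set of decorated trees with $n+1$ internal nodes and $n+1$ leaves in which every internal node has a leaf as its first child. The map $\mathrm{Ctr}$: for $R\in\mathcal{RS}_n$, $\mathrm{Ctr}(R)$ is obtained by deleting all leaves of $R$, each remaining (formerly internal) node $w$ receiving label $\ell(f)+1$ where $f$ is the first child of $w$ in $R$; the nodes of $\mathrm{Ctr}(R)$ thus correspond to the internal nodes of $R$. $\mathrm{Ctr}(R)$ is a sticky tree. *)

theory Defs
  imports Main
begin

text \<open>A node is addressed by its path from the root: the list of child indices
(0 = leftmost child). The root is the empty path; the depth of a node is the length of
its path.\<close>

datatype ptree = Node "ptree list"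

fun children :: "ptree \<Rightarrow> ptree list" where
  "children (Node ts) = ts"

fun valid :: "ptree \<Rightarrow> nat list \<Rightarrow> bool" where
  "valid t [] = True"
| "valid (Node ts) (i # p) = (i < length ts \<and> valid (ts ! i) p)"

definition nodes :: "ptree \<Rightarrow> nat list set" where
  "nodes t = {p. valid t p}"

fun subtree :: "ptree \<Rightarrow> nat list \<Rightarrow> ptree" where
  "subtree t [] = t"
| "subtree (Node ts) (i # p) = (if i < length ts then subtree (ts ! i) p else Node [])"

definition is_leaf :: "ptree \<Rightarrow> nat list \<Rightarrow> bool" where
  "is_leaf t p \<longleftrightarrow> p \<in> nodes t \<and> children (subtree t p) = []"

definition is_internal :: "ptree \<Rightarrow> nat list \<Rightarrow> bool" where
  "is_internal t p \<longleftrightarrow> p \<in> nodes t \<and> children (subtree t p) \<noteq> []"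

definition leaves :: "ptree \<Rightarrow> nat list set" where
  "leaves t = {p. is_leaf t p}"

definition internals :: "ptree \<Rightarrow> nat list set" where
  "internals t = {p. is_internal t p}"

definition sub_nodes :: "ptree \<Rightarrow> nat list \<Rightarrow> nat list set" where
  "sub_nodes t u = {p \<in> nodes t. \<exists>s. p = u @ s}"

definition pre_lt :: "nat list \<Rightarrow> nat list \<Rightarrow> bool" where
  "pre_lt p q \<longleftrightarrow> (\<exists>s. s \<noteq> [] \<and> q = p @ s) \<or>
     (\<exists>c i j r s. i < j \<and> p = c @ i # r \<and> q = c @ j # s)"

definition decorated :: "ptree \<Rightarrow> (nat list \<Rightarrow> int) \<Rightarrow> bool" where
  "decorated R l \<longleftrightarrow>
     \<comment> \<open>(1') leaf f whose parent has depth d = length f - 1\<close>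
     (\<forall>f \<in> leaves R. f \<noteq> [] \<longrightarrow> -1 \<le> l f \<and> l f \<le> int (length f) - 2) \<and>
     \<comment> \<open>(2') every internal node of positive depth d has a descendant leaf with label < d - 1\<close>
     (\<forall>u \<in> internals R. length u > 0 \<longrightarrow>
        (\<exists>f \<in> leaves R \<inter> sub_nodes R u. l f < int (length u) - 1)) \<and>
     \<comment> \<open>(3') node t of depth d, child u of t\<close>
     (\<forall>t \<in> nodes R. \<forall>u \<in> nodes R. u \<noteq> [] \<and> butlast u = t \<longrightarrow>
        (\<forall>f \<in> leaves R \<inter> sub_nodes R u. l f = int (length t) \<longrightarrow>
           (\<forall>g \<in> leaves R \<inter> sub_nodes R u. pre_lt g f \<longrightarrow> l g \<ge> int (length t))))"

definition RS :: "nat \<Rightarrow> (ptree \<times> (nat list \<Rightarrow> int)) set" where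
  "RS n = {(R, l). decorated R l \<and> card (internals R) = n + 1 \<and> card (leaves R) = n + 1 \<and>
             (\<forall>w \<in> internals R. is_leaf R (w @ [0]))}"

definition dec_cert :: "ptree \<Rightarrow> (nat list \<Rightarrow> int) \<Rightarrow> nat list \<Rightarrow> nat list \<Rightarrow> bool" where
  "dec_cert R l u f \<longleftrightarrow> f \<in> leaves R \<inter> sub_nodes R u \<and> l f < int (length u) - 1 \<and>
     (\<forall>g \<in> leaves R \<inter> sub_nodes R u. pre_lt g f \<longrightarrow> l g \<ge> int (length u) - 1)"

definition sticky_cert :: "ptree \<Rightarrow> (nat list \<Rightarrow> nat) \<Rightarrow> nat list \<Rightarrow> nat list \<Rightarrow> bool" where
  "sticky_cert S l u v \<longleftrightarrow> v \<in> sub_nodes S u \<and> l v < length u \<and>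
     (\<forall>w \<in> sub_nodes S u. pre_lt w v \<longrightarrow> l w \<ge> length u)"

fun leafT :: "ptree \<Rightarrow> bool" where
  "leafT (Node ts) = (ts = [])"

function ctr :: "ptree \<Rightarrow> ptree" where
  "ctr (Node ts) = Node (map ctr (filter (\<lambda>t. \<not> leafT t) ts))"
  by pat_completeness auto
termination
  by (relation "measure size") (auto intro: size_list_estimation' less_Suc_eq_le[THEN iffD2])

text \<open>Correspondence of nodes: an internal node of R (path p) corresponds to the node of
Ctr(R) obtained by renumbering, at each step, the child index among internal siblings.\<close>
fun ctr_pos :: "ptree \<Rightarrow> nat list \<Rightarrow> nat list" where
  "ctr_pos t [] = []"
| "ctr_pos (Node ts) (i # p) =
     (if i < length ts then length (filter (\<lambda>t. \<not> leafT t) (take i ts)) # ctr_pos (ts ! i) p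
      else [])"

definition ctr_label :: "ptree \<Rightarrow> (nat list \<Rightarrow> int) \<Rightarrow> nat list \<Rightarrow> nat" where
  "ctr_label R l p' = nat (l (inv_into (internals R) (ctr_pos R) p' @ [0]) + 1)"

end

theory Submission
  imports Defs
begin

text \<open>In a tree of \<open>RS\<^sub>n\<close> every leaf is a first child, since the first-child map from internal
nodes to leaves is injective between sets of equal size. Hence the certificate leaf \<open>f\<close> of \<open>u\<close>
is the first child of \<open>v\<close>, so \<open>v'\<close> carries the label \<open>\<ell>(f) + 1 < d\<close>. Contraction
maps the internal nodes of \<open>R\<^sub>u\<close> bijectively onto \<open>S\<^sub>u\<^sub>'\<close> and reflects prefix order, while
appending a first child preserves it; so a node of \<open>S\<^sub>u\<^sub>'\<close> preceding \<open>v'\<close> comes from an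
internal \<open>w\<close> whose first child precedes \<open>f\<close> in \<open>R\<^sub>u\<close>, and minimality of \<open>f\<close> bounds its label.\<close>

lemma pre_lt_Nil_left [simp]: "pre_lt [] q \<longleftrightarrow> q \<noteq> []"
  unfolding pre_lt_def by auto

lemma pre_lt_Nil_right [simp]: "\<not> pre_lt p []"
  unfolding pre_lt_def by auto

lemma pre_lt_Cons_Cons [simp]:
  "pre_lt (i # p) (j # q) \<longleftrightarrow> i < j \<or> (i = j \<and> pre_lt p q)"
proof
  assume "pre_lt (i # p) (j # q)"
  then consider (prefix) s where "s \<noteq> []" "j # q = (i # p) @ s"
    | (branch) c a b r s where "a < b" "i # p = c @ a # r" "j # q = c @ b # s"
    unfolding pre_lt_def by blast
  then show "i < j \<or> (i = j \<and> pre_lt p q)"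
  proof cases
    case prefix
    then show ?thesis unfolding pre_lt_def by auto
  next
    case branch
    then show ?thesis unfolding pre_lt_def by (cases c) auto
  qed
next
  assume "i < j \<or> (i = j \<and> pre_lt p q)"
  then show "pre_lt (i # p) (j # q)"
    unfolding pre_lt_def by (metis append_Cons append_Nil)
qed

lemma pre_lt_snoc_0: "pre_lt w v \<Longrightarrow> pre_lt (w @ [0]) (v @ [0])"
  by (induction w v rule: list_induct2') auto

lemma valid_append: "valid t (u @ s) \<longleftrightarrow> valid t u \<and> valid (subtree t u) s"
  by (induction t u rule: valid.induct) auto

lemma subtree_append: "valid t u \<Longrightarrow> subtree t (u @ s) = subtree (subtree t u) s"
  by (induction t u rule: valid.induct) auto

lemma leafT_iff_children_Nil: "leafT t \<longleftrightarrow> children t = []"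
  by (cases t) auto

lemma is_internal_Nil [simp]: "is_internal t [] \<longleftrightarrow> children t \<noteq> []"
  by (simp add: is_internal_def nodes_def)

lemma is_internal_Cons [simp]:
  "is_internal (Node ts) (i # p) \<longleftrightarrow> i < length ts \<and> is_internal (ts ! i) p"
  by (auto simp: is_internal_def nodes_def)

lemma is_internal_append:
  "is_internal t (u @ s) \<longleftrightarrow> valid t u \<and> is_internal (subtree t u) s"
  by (auto simp: is_internal_def nodes_def valid_append subtree_append)

lemma is_internal_not_leafT: "is_internal t p \<Longrightarrow> \<not> leafT t"
  by (cases t; cases p) auto

lemma is_internal_prefix: "is_internal t (u @ s) \<Longrightarrow> is_internal t u"
  using is_internal_append is_internal_not_leafT
  by (metis append_Nil2 is_internal_Nil leafT_iff_children_Nil)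

lemma length_filter_take_mono:
  "a \<le> b \<Longrightarrow> length (filter P (take a xs)) \<le> length (filter P (take b xs))"
  by (metis le_add_diff_inverse filter_append length_append le_add1 take_add)

lemma length_filter_take_strict_mono:
  assumes "i < k" "i < length xs" "P (xs ! i)"
  shows "length (filter P (take i xs)) < length (filter P (take k xs))"
proof -
  have "length (filter P (take i xs)) < length (filter P (take (Suc i) xs))"
    using assms by (simp add: take_Suc_conv_app_nth)
  also have "\<dots> \<le> length (filter P (take k xs))"
    using assms(1) by (intro length_filter_take_mono) simp
  finally show ?thesis .
qed

lemma length_filter_take_inj:
  "\<lbrakk>i < length xs; j < length xs; P (xs ! i); P (xs ! j);
    length (filter P (take i xs)) = length (filter P (take j xs))\<rbrakk> \<Longrightarrow> i = j"
  by (metis length_filter_take_strict_mono linorder_neqE_nat less_irrefl)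

lemma nth_filter_take:
  assumes "i < length xs" "P (xs ! i)"
  shows "filter P xs ! length (filter P (take i xs)) = xs ! i"
proof -
  have "filter P xs = filter P (take i xs) @ xs ! i # filter P (drop (Suc i) xs)"
    using assms by (metis filter.simps(2) filter_append id_take_nth_drop)
  then show ?thesis by (simp add: nth_append)
qed

lemma obtain_index_of_nth_filter:
  assumes "j < length (filter P xs)"
  obtains i where "i < length xs" "P (xs ! i)" "length (filter P (take i xs)) = j"
proof -
  have "\<exists>i < length xs. P (xs ! i) \<and> length (filter P (take i xs)) = j"
    using assms
  proof (induction xs arbitrary: j)
    case (Cons x xs)
    then show ?case
      by (cases "P x"; cases j) (force intro: exI[of _ 0] exI[of _ "Suc _"])+
  qed simp
  then show ?thesis using that by blast
qed

lemma ctr_pos_length: "valid t p \<Longrightarrow> length (ctr_pos t p) = length p"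
  by (induction t p rule: valid.induct) auto

lemma ctr_pos_append: "valid t u \<Longrightarrow> ctr_pos t (u @ s) = ctr_pos t u @ ctr_pos (subtree t u) s"
  by (induction t u rule: valid.induct) auto

lemma ctr_pos_node:
  "is_internal t p \<Longrightarrow>
     valid (ctr t) (ctr_pos t p) \<and> subtree (ctr t) (ctr_pos t p) = ctr (subtree t p)"
proof (induction p arbitrary: t)
  case (Cons i p)
  obtain ts where t: "t = Node ts" by (cases t)
  let ?P = "\<lambda>t. \<not> leafT t"
  have i: "i < length ts" "?P (ts ! i)" "is_internal (ts ! i) p"
    using Cons.prems is_internal_not_leafT by (auto simp: t)
  then have "length (filter ?P (take i ts)) < length (filter ?P ts)"
    using length_filter_take_strict_mono[of i "length ts" ts ?P] by simp
  then show ?case using Cons.IH[OF i(3)] nth_filter_take[of i ts ?P, OF i(1,2)] i(1) by (simp add: t)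
qed simp

lemma ctr_pos_inj_on: "inj_on (ctr_pos t) (internals t)"
proof (rule inj_onI)
  fix p q
  assume "p \<in> internals t" "q \<in> internals t" "ctr_pos t p = ctr_pos t q"
  then show "p = q"
  proof (induction p arbitrary: t q)
    case (Cons i p)
    obtain ts where t: "t = Node ts" by (cases t)
    with Cons.prems obtain j q' where q: "q = j # q'" by (cases q) (auto simp: internals_def)
    have "i = j"
      using Cons.prems length_filter_take_inj[of i ts j "\<lambda>t. \<not> leafT t"] is_internal_not_leafT
      by (auto simp: t q internals_def)
    then show ?case using Cons by (auto simp: t q internals_def)
  next
    case Nil
    then show ?case by (cases t; cases q) (auto simp: internals_def)
  qed
qed

lemma ctr_pos_image_internals:
  assumes "\<not> leafT t"
  shows "ctr_pos t ` internals t = nodes (ctr t)"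
proof
  show "ctr_pos t ` internals t \<subseteq> nodes (ctr t)"
    using ctr_pos_node by (auto simp: internals_def nodes_def)
next
  show "nodes (ctr t) \<subseteq> ctr_pos t ` internals t"
  proof
    fix q
    assume "q \<in> nodes (ctr t)"
    then have "valid (ctr t) q" by (simp add: nodes_def)
    then have "\<exists>p. is_internal t p \<and> ctr_pos t p = q"
      using assms
    proof (induction q arbitrary: t)
      case Nil
      then show ?case by (auto simp: leafT_iff_children_Nil intro: exI[of _ "[]"])
    next
      case (Cons j q)
      obtain ts where t: "t = Node ts" by (cases t)
      let ?P = "\<lambda>t. \<not> leafT t"
      have j: "j < length (filter ?P ts)" and q: "valid (ctr (filter ?P ts ! j)) q"
        using Cons.prems by (auto simp: t)
      obtain i where i: "i < length ts" "?P (ts ! i)" "length (filter ?P (take i ts)) = j"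
        using obtain_index_of_nth_filter[OF j] by blast
      obtain p where "is_internal (ts ! i) p" "ctr_pos (ts ! i) p = q"
        using Cons.IH[of "ts ! i"] q i nth_filter_take[of i ts ?P, OF i(1,2)] by auto
      then show ?case using i by (intro exI[of _ "i # p"]) (simp add: t)
    qed
    then show "q \<in> ctr_pos t ` internals t" by (auto simp: internals_def)
  qed
qed

lemma pre_lt_ctr_pos_imp_pre_lt:
  "\<lbrakk>is_internal t w; is_internal t v; pre_lt (ctr_pos t w) (ctr_pos t v)\<rbrakk> \<Longrightarrow> pre_lt w v"
proof (induction w arbitrary: t v)
  case Nil
  then show ?case by (cases t; cases v) auto
next
  case (Cons i w)
  obtain ts where t: "t = Node ts" by (cases t)
  with Cons.prems obtain j v' where v: "v = j # v'" by (cases v) auto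
  let ?P = "\<lambda>t. \<not> leafT t"
  let ?rank = "\<lambda>k. length (filter ?P (take k ts))"
  have i: "i < length ts" "?P (ts ! i)" "is_internal (ts ! i) w"
    and j: "j < length ts" "?P (ts ! j)" "is_internal (ts ! j) v'"
    using Cons.prems is_internal_not_leafT by (auto simp: t v)
  have "?rank i < ?rank j \<or> (?rank i = ?rank j \<and> pre_lt (ctr_pos (ts ! i) w) (ctr_pos (ts ! j) v'))"
    using Cons.prems(3) i(1) j(1) by (simp add: t v)
  then show ?case
  proof
    assume "?rank i < ?rank j"
    then have "i < j" using length_filter_take_mono[of j i ?P ts] by (meson not_le)
    then show ?thesis by (simp add: v)
  next
    assume rank: "?rank i = ?rank j \<and> pre_lt (ctr_pos (ts ! i) w) (ctr_pos (ts ! j) v')"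
    then have "i = j" using length_filter_take_inj[of i ts j ?P] i j by blast
    then show ?thesis using rank Cons.IH[of "ts ! i" v'] i j by (simp add: v)
  qed
qed

lemma ctr_pos_in_sub_nodes_iff:
  assumes u: "is_internal t u" and w: "is_internal t w"
  shows "ctr_pos t w \<in> sub_nodes (ctr t) (ctr_pos t u) \<longleftrightarrow> w \<in> sub_nodes t u"
proof
  assume "ctr_pos t w \<in> sub_nodes (ctr t) (ctr_pos t u)"
  then obtain s' where s': "ctr_pos t w = ctr_pos t u @ s'" by (auto simp: sub_nodes_def)
  have valid: "valid t u" "valid t w" using u w by (auto simp: is_internal_def nodes_def)
  define w0 where "w0 = take (length u) w"
  have w_split: "w = w0 @ drop (length u) w" by (simp add: w0_def)
  have w0: "is_internal t w0" "valid t w0"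
    using is_internal_prefix w w_split by (metis, metis is_internal_append)
  have "length u \<le> length w"
    using arg_cong[OF s', of length] ctr_pos_length valid by simp
  then have "length (ctr_pos t w0) = length (ctr_pos t u)"
    using ctr_pos_length valid(1) w0(2) by (simp add: w0_def)
  moreover have "ctr_pos t w = ctr_pos t w0 @ ctr_pos (subtree t w0) (drop (length u) w)"
    using ctr_pos_append[OF w0(2)] w_split by metis
  ultimately have "ctr_pos t w0 = ctr_pos t u" using s' by (metis append_eq_append_conv)
  then have "w0 = u"
    using ctr_pos_inj_on u w0(1) by (auto simp: internals_def dest: inj_onD)
  then show "w \<in> sub_nodes t u"
    using w_split valid(2) by (auto simp: sub_nodes_def nodes_def)
next
  assume "w \<in> sub_nodes t u"
  then obtain s where "w = u @ s" by (auto simp: sub_nodes_def)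
  then show "ctr_pos t w \<in> sub_nodes (ctr t) (ctr_pos t u)"
    using ctr_pos_node[OF w] ctr_pos_append u by (auto simp: sub_nodes_def nodes_def is_internal_def)
qed

lemma RS_leaves_eq_first_children:
  assumes "(R, l) \<in> RS n"
  shows "leaves R = (\<lambda>w. w @ [0]) ` internals R"
proof -
  have card: "card (internals R) = n + 1" "card (leaves R) = n + 1"
    and first_child: "\<forall>w \<in> internals R. is_leaf R (w @ [0])"
    using assms by (auto simp: RS_def)
  have "finite (leaves R)" using card(2) card.infinite by fastforce
  moreover have "(\<lambda>w. w @ [0]) ` internals R \<subseteq> leaves R"
    using first_child by (auto simp: leaves_def)
  moreover have "card ((\<lambda>w. w @ [0]) ` internals R) = card (leaves R)"
    using card by (simp add: card_image inj_on_def)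
  ultimately show ?thesis by (metis card_subset_eq)
qed

lemma ctr_label_ctr_pos:
  "w \<in> internals R \<Longrightarrow> ctr_label R l (ctr_pos R w) = nat (l (w @ [0]) + 1)"
  by (simp add: ctr_label_def inv_into_f_f[OF ctr_pos_inj_on])

lemma sub_nodes_snoc_imp_sub_nodes:
  "\<lbrakk>w @ [i] \<in> sub_nodes t u; w @ [i] \<noteq> u\<rbrakk> \<Longrightarrow> w \<in> sub_nodes t u"
  by (auto simp: sub_nodes_def nodes_def valid_append)
     (metis append_butlast_last_id butlast_append butlast_snoc)

theorem mainTheorem8:
  fixes n :: nat and R :: ptree and l :: "nat list \<Rightarrow> int" and u f :: "nat list"
  assumes "(R, l) \<in> RS n"
    and "u \<in> internals R" and "length u > 0"
    and "dec_cert R l u f"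
  shows "sticky_cert (ctr R) (ctr_label R l) (ctr_pos R u) (ctr_pos R (butlast f))"
proof -
  have f: "f \<in> leaves R" "f \<in> sub_nodes R u" "l f < int (length u) - 1"
    and f_first: "\<forall>g \<in> leaves R \<inter> sub_nodes R u. pre_lt g f \<longrightarrow> l g \<ge> int (length u) - 1"
    using assms(4) by (auto simp: dec_cert_def)
  obtain v where v: "v \<in> internals R" "f = v @ [0]"
    using f(1) RS_leaves_eq_first_children[OF assms(1)] by auto
  have u: "is_internal R u" "valid R u" using assms(2) by (auto simp: internals_def is_internal_def nodes_def)
  have "f \<noteq> u" using f(1) u(1) by (auto simp: leaves_def is_leaf_def is_internal_def)
  then have "v \<in> sub_nodes R u" using sub_nodes_snoc_imp_sub_nodes f(2) v(2) by blast
  then have v_below: "ctr_pos R v \<in> sub_nodes (ctr R) (ctr_pos R u)"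
    using ctr_pos_in_sub_nodes_iff u(1) v(1) by (simp add: internals_def)
  \<comment> \<open>condition (1') matters here: \<open>ctr_label\<close> truncates through \<open>nat\<close>\<close>
  have "-1 \<le> l f"
    using assms(1,3) f(1,2) by (auto simp: RS_def decorated_def sub_nodes_def)
  then have v_small: "ctr_label R l (ctr_pos R v) < length (ctr_pos R u)"
    using ctr_label_ctr_pos[OF v(1)] v(2) f(3) ctr_pos_length[OF u(2)] assms(3) by simp
  have "ctr_label R l w' \<ge> length (ctr_pos R u)"
    if w': "w' \<in> sub_nodes (ctr R) (ctr_pos R u)" "pre_lt w' (ctr_pos R v)" for w'
  proof -
    have "w' \<in> ctr_pos R ` internals R"
      using w'(1) ctr_pos_image_internals[OF is_internal_not_leafT[OF u(1)]]
      by (auto simp: sub_nodes_def)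
    then obtain w where w: "w \<in> internals R" "w' = ctr_pos R w" by blast
    then have "w \<in> sub_nodes R u" "pre_lt w v"
      using w' u(1) v(1) ctr_pos_in_sub_nodes_iff pre_lt_ctr_pos_imp_pre_lt
      by (auto simp: internals_def)
    moreover have "w @ [0] \<in> leaves R"
      using w(1) RS_leaves_eq_first_children[OF assms(1)] by blast
    ultimately have "w @ [0] \<in> leaves R \<inter> sub_nodes R u" "pre_lt (w @ [0]) f"
      using v(2) pre_lt_snoc_0 by (auto simp: sub_nodes_def leaves_def is_leaf_def)
    then have "l (w @ [0]) \<ge> int (length u) - 1" using f_first by blast
    then show ?thesis using ctr_label_ctr_pos[OF w(1)] w(2) ctr_pos_length[OF u(2)] by simp
  qed
  with v_below v_small show ?thesis by (simp add: sticky_cert_def v(2))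
qed

end
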